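(* In the Simpler Lazy Set algorithm, let $(S,e,T)$ be an $\mathrm{RM}$ step with $\chi(e)=1$ that removes the address $d=\mathrm{adr}(e)$ from the main branch of $S$. Let $c$ be the address on the main branch of $S$ with $\mathrm{Next}^S(c)=d$, and let $d'=\mathrm{Next}^S(d)$. Let $a$ be any active address of $S$, let $Q$ be the path from $a$ to $T$ in $S$, and let $R$ be the path from $a$ to $T$ in $T$. Then either $R=Q$ or $R=Q\setminus\{d\}$. More precisely: (1) if $c$ is not on $Q$ then $R=Q$; (2) if $c$ is on $Q$ then $d$ and $d'$ are on $Q$ and $R=Q\setminus\{d\}$.
   Context: Simpler Lazy Set algorithm. Fix a countably infinite set $A$ of addresses containing two distinguished addresses $\mathsf H$ (head) and $\mathsf T$ (tail); let $\mathrm{Number}=\mathbb N\cup\{-1,\infty\}$. A state $S$ consists of a set $\mathrm{Active}^S\subseteq A$ of active addresses, a function $\mathrm{Next}^S:\mathrm{Active}^S\setminus\{\mathsf T\}\to A$, a function $\mathrm{Val}^S:\mathrm{Active}^S\to\mathrm{Number}$, and for each process $p$ values $PC_p$ (a line number among $0,1,2,3.1,\dots,3.5$), $x_p\in\mathbb N$, $\mathrm{curr}_p\in A$ and $\mathrm{status}_p\in\{0,1,f\}$. $S$ is normal if $\mathrm{Active}^S$ is finite, $\mathsf H,\mathsf T$ are active with values $-1,\infty$, every other active address has value in $\mathbb N$, and for every active $a\neq\mathsf T$, $\mathrm{Next}(a)$ is active and $\mathrm{Val}(a)<\mathrm{Val}(\mathrm{Next}(a))$. A path is a sequence $a_1,\dots,a_m$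 ($m>1$) of active addresses with $\mathrm{Next}(a_i)=a_{i+1}$; in a normal state every active address lies on a unique path to $\mathsf T$; the main branch is the path from $\mathsf H$ to $\mathsf T$. An $\mathrm{RM}(x)$ step $(S,e,T)$ of process $p$ (enabled on a normal $S$ with $PC_p^S=2$, $x=x_p$, resulting in $PC_p^T=0$): if the main branch of $S$ contains an address $cu$ with value $x$, let $pred$ be the address on the main branch with $\mathrm{Next}^S(pred)=cu$; then $T$ agrees with $S$ except $\mathrm{Next}^T(pred)=\mathrm{Next}^S(cu)$, and $\chi(e)=1$, $\mathrm{adr}(e)=cu$ ($e$ removes $cu$ from the main branch). Otherwise $T=S$ except for $PC_p$, and $\chi(e)=0$. *)

theory Defs
  imports Main "HOL-Library.Countable"
begin

datatype number = NegOne | Fin nat | Infty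

fun num_less :: "number \<Rightarrow> number \<Rightarrow> bool" where
  "num_less NegOne NegOne = False"
| "num_less NegOne _ = True"
| "num_less (Fin _) NegOne = False"
| "num_less (Fin m) (Fin n) = (m < n)"
| "num_less (Fin _) Infty = True"
| "num_less Infty _ = False"

datatype line = L0 | L1 | L2 | L3_1 | L3_2 | L3_3 | L3_4 | L3_5

datatype status = St0 | St1 | Stf

text \<open>A state; Next and Val are total functions of which only the values on
  Active - {tail} (resp. Active) are meaningful.\<close>
record ('a, 'p) state =
  Active :: "'a set"
  Next   :: "'a \<Rightarrow> 'a"
  Val    :: "'a \<Rightarrow> number"
  PC     :: "'p \<Rightarrow> line"
  xv     :: "'p \<Rightarrow> nat"
  curr   :: "'p \<Rightarrow> 'a"
  status :: "'p \<Rightarrow> status"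

definition normal :: "'a \<Rightarrow> 'a \<Rightarrow> ('a, 'p) state \<Rightarrow> bool" where
  "normal H T S \<longleftrightarrow>
     finite (Active S) \<and> H \<in> Active S \<and> T \<in> Active S \<and>
     Val S H = NegOne \<and> Val S T = Infty \<and>
     (\<forall>a \<in> Active S - {H, T}. \<exists>n. Val S a = Fin n) \<and>
     (\<forall>a \<in> Active S - {T}. Next S a \<in> Active S \<and> num_less (Val S a) (Val S (Next S a)))"

text \<open>A path a_1,...,a_m (m > 1) of active addresses with Next(a_i) = a_(i+1);
  Next is only defined on non-tail addresses, so a_i \<noteq> T for i < m.\<close>
definition is_path :: "'a \<Rightarrow> ('a, 'p) state \<Rightarrow> 'a list \<Rightarrow> bool" where
  "is_path T S xs \<longleftrightarrow>
     length xs > 1 \<and> set xs \<subseteq> Active S \<and>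
     (\<forall>i. Suc i < length xs \<longrightarrow> xs ! i \<noteq> T \<and> Next S (xs ! i) = xs ! Suc i)"

definition path_to_tail :: "'a \<Rightarrow> ('a, 'p) state \<Rightarrow> 'a \<Rightarrow> 'a list \<Rightarrow> bool" where
  "path_to_tail T S a xs \<longleftrightarrow> is_path T S xs \<and> hd xs = a \<and> last xs = T"

definition main_branch :: "'a \<Rightarrow> 'a \<Rightarrow> ('a, 'p) state \<Rightarrow> 'a list \<Rightarrow> bool" where
  "main_branch H T S xs \<longleftrightarrow> path_to_tail T S H xs"

record ('a, 'p) event =
  proc :: 'p
  chi  :: nat
  adr  :: 'a

definition RM_step :: "'a \<Rightarrow> 'a \<Rightarrow> ('a, 'p) state \<Rightarrow> ('a, 'p) event \<Rightarrow> ('a, 'p) state \<Rightarrow> bool" where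
  "RM_step H T S e S' \<longleftrightarrow>
     (let p = proc e; x = xv S p in
      normal H T S \<and> PC S p = L2 \<and>
      ((\<exists>M cu pred. main_branch H T S M \<and> cu \<in> set M \<and> Val S cu = Fin x \<and>
          pred \<in> set M \<and> pred \<noteq> T \<and> Next S pred = cu \<and>
          S' = S\<lparr>Next := (Next S)(pred := Next S cu), PC := (PC S)(p := L0)\<rparr> \<and>
          chi e = 1 \<and> adr e = cu)
       \<or>
       ((\<forall>M. main_branch H T S M \<longrightarrow> (\<forall>cu \<in> set M. Val S cu \<noteq> Fin x)) \<and>
          S' = S\<lparr>PC := (PC S)(p := L0)\<rparr> \<and> chi e = 0)))"

end

theory Submission
  imports Defs
begin

(* Call a list a chain if it follows Next and ends at T.  A chain is determined by its head, so
   it has no repetitions (a repeated address would head two chains of different lengths), and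
   Next is injective on it (two addresses with the same successor are followed by the same
   chain, hence sit at the same position).  So the predecessor of d chosen by the RM step is c,
   and the step merely redirects Next c to Next d.  A path avoiding c is still a chain afterwards,
   while a path through c runs through c, d, Next d consecutively and loses exactly d. *)

primrec next_chain :: "('a \<Rightarrow> 'a) \<Rightarrow> 'a \<Rightarrow> 'a list \<Rightarrow> bool" where
  "next_chain f t [] = False"
| "next_chain f t (x # xs) =
     (if xs = [] then x = t else x \<noteq> t \<and> f x = hd xs \<and> next_chain f t xs)"

lemma next_chain_iff_nth:
  "next_chain f t xs \<longleftrightarrow> xs \<noteq> [] \<and> last xs = t \<and>
     (\<forall>i. Suc i < length xs \<longrightarrow> xs ! i \<noteq> t \<and> f (xs ! i) = xs ! Suc i)"
proof (induction xs)
  case (Cons x xs)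
  have all_Suc: "(\<forall>i. P i) \<longleftrightarrow> P 0 \<and> (\<forall>i. P (Suc i))" for P :: "nat \<Rightarrow> bool"
    using not0_implies_Suc by metis
  show ?case
  proof (cases xs)
    case (Cons y ys)
    then show ?thesis
      using Cons.IH by (subst all_Suc) auto
  qed simp
qed simp

lemma path_to_tail_next_chain:
  "path_to_tail t S a xs \<Longrightarrow> next_chain (Next S) t xs \<and> hd xs = a"
  unfolding path_to_tail_def is_path_def next_chain_iff_nth by auto

lemma next_chain_unique:
  "next_chain f t xs \<Longrightarrow> next_chain f t ys \<Longrightarrow> hd xs = hd ys \<Longrightarrow> xs = ys"
proof (induction xs arbitrary: ys)
  case (Cons x xs)
  then show ?case
    by (cases ys) (auto split: if_splits)
qed simp

lemma next_chain_appendD: "next_chain f t (xs @ ys) \<Longrightarrow> ys \<noteq> [] \<Longrightarrow> next_chain f t ys"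
  by (induction xs) (auto split: if_splits)

lemma next_chain_closed:
  "next_chain f t xs \<Longrightarrow> x \<in> set xs \<Longrightarrow> x \<noteq> t \<Longrightarrow> f x \<in> set xs"
  by (induction xs) (auto split: if_splits)

lemma next_chain_split:
  assumes "next_chain f t xs" "x \<in> set xs" "x \<noteq> t"
  obtains ys zs where "xs = ys @ x # f x # zs"
proof -
  obtain ys ws where xs: "xs = ys @ x # ws"
    using split_list \<open>x \<in> set xs\<close> by metis
  then have "next_chain f t (x # ws)"
    using assms(1) next_chain_appendD[of f t ys "x # ws"] by simp
  with \<open>x \<noteq> t\<close> have "ws = f x # tl ws"
    by (cases ws) (simp_all split: if_splits)
  with xs show thesis
    using that[of ys "tl ws"] by simp
qed

lemma next_chain_distinct:
  assumes "next_chain f t xs"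
  shows "distinct xs"
proof (rule ccontr)
  assume "\<not> distinct xs"
  then obtain as x bs cs where xs: "xs = as @ [x] @ bs @ [x] @ cs"
    using not_distinct_decomp by blast
  have "next_chain f t (x # bs @ x # cs)"
    using assms next_chain_appendD[of f t as "x # bs @ x # cs"] xs by simp
  moreover have "next_chain f t (x # cs)"
    using assms next_chain_appendD[of f t "as @ x # bs" "x # cs"] xs by simp
  ultimately have "x # bs @ x # cs = x # cs"
    by (rule next_chain_unique) simp
  then show False
    by (metis impossible_Cons le_add2 length_append list.inject)
qed

lemma next_chain_inj_on:
  assumes "next_chain f t xs"
  shows "inj_on f (set xs - {t})"
proof (rule inj_onI)
  fix u v
  assume u: "u \<in> set xs - {t}" and v: "v \<in> set xs - {t}" and "f u = f v"
  obtain ys zs where xs_u: "xs = ys @ u # f u # zs"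
    using next_chain_split[OF assms] u by blast
  obtain ys' zs' where xs_v: "xs = ys' @ v # f v # zs'"
    using next_chain_split[OF assms] v by blast
  have "next_chain f t (f u # zs)"
    using assms next_chain_appendD[of f t "ys @ [u]" "f u # zs"] xs_u by simp
  moreover have "next_chain f t (f v # zs')"
    using assms next_chain_appendD[of f t "ys' @ [v]" "f v # zs'"] xs_v by simp
  ultimately have "f u # zs = f v # zs'"
    by (rule next_chain_unique) (simp add: \<open>f u = f v\<close>)
  with xs_u xs_v have "ys @ [u] = ys' @ [v]"
    by simp
  then show "u = v"
    by simp
qed

lemma next_chain_fun_upd: "c \<notin> set xs \<Longrightarrow> next_chain (f(c := v)) t xs = next_chain f t xs"
  by (induction xs) auto

lemma next_chain_bypass:
  assumes "next_chain f t (ys @ c # d # zs)" "d \<noteq> t" "c \<notin> set ys" "c \<notin> set zs"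
  shows "next_chain (f(c := f d)) t (ys @ c # zs)"
  using assms
proof (induction ys)
  case Nil
  then have "c \<noteq> t" "zs \<noteq> []" "f d = hd zs" "next_chain f t zs"
    by (auto split: if_splits)
  moreover have "next_chain (f(c := f d)) t zs"
    using next_chain_fun_upd[OF \<open>c \<notin> set zs\<close>] \<open>next_chain f t zs\<close> by blast
  ultimately show ?case
    by (simp only: append_Nil next_chain.simps if_False fun_upd_same simp_thms)
next
  case (Cons y ys)
  then have "y \<noteq> t" "y \<noteq> c" "f y = hd (ys @ c # zs)" "next_chain f t (ys @ c # d # zs)"
    by (auto simp: hd_append)
  with Cons.IH Cons.prems show ?case
    by (simp add: hd_append)
qed

lemma next_chain_bypass_filter:
  assumes "next_chain f t xs" "c \<in> set xs" "c \<noteq> t" "f c = d" "d \<noteq> t"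
  shows "next_chain (f(c := f d)) t (filter (\<lambda>y. y \<noteq> d) xs)"
    and "hd (filter (\<lambda>y. y \<noteq> d) xs) = hd xs"
proof -
  obtain ys zs where xs: "xs = ys @ c # d # zs"
    using next_chain_split assms by metis
  have "distinct xs"
    using next_chain_distinct \<open>next_chain f t xs\<close> by metis
  have "filter (\<lambda>y. y \<noteq> d) ws = ws" if "d \<notin> set ws" for ws
    using that by (induction ws) auto
  with \<open>distinct xs\<close> xs have filter_xs: "filter (\<lambda>y. y \<noteq> d) xs = ys @ c # zs"
    by auto
  show "next_chain (f(c := f d)) t (filter (\<lambda>y. y \<noteq> d) xs)"
    using next_chain_bypass[of f t ys c d zs] assms \<open>distinct xs\<close> xs filter_xs by simp
  show "hd (filter (\<lambda>y. y \<noteq> d) xs) = hd xs"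
    using filter_xs xs by (cases ys) simp_all
qed

lemma RM_step_bypass:
  assumes step: "RM_step H T S e S'" and "chi e = 1"
    and M: "main_branch H T S M" and "c \<in> set M" "c \<noteq> T" "Next S c = adr e"
  shows "adr e \<noteq> T" and "Next S' = (Next S)(c := Next S (adr e))"
proof -
  obtain M' pred where M': "main_branch H T S M'" and "pred \<in> set M'" "pred \<noteq> T"
    and "normal H T S" "Val S (adr e) = Fin (xv S (proc e))" "Next S pred = adr e"
    and S': "S' = S\<lparr>Next := (Next S)(pred := Next S (adr e)), PC := (PC S)(proc e := L0)\<rparr>"
    using step \<open>chi e = 1\<close> unfolding RM_step_def Let_def by auto
  show "adr e \<noteq> T"
    using \<open>normal H T S\<close> \<open>Val S (adr e) = Fin _\<close> unfolding normal_def by auto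
  have chain: "next_chain (Next S) T M"
    using M path_to_tail_next_chain unfolding main_branch_def by metis
  have "M' = M"
    using M M' next_chain_unique path_to_tail_next_chain unfolding main_branch_def by metis
  then have "pred = c"
    using inj_onD[OF next_chain_inj_on[OF chain], of pred c] \<open>pred \<in> set M'\<close> \<open>pred \<noteq> T\<close>
      \<open>c \<in> set M\<close> \<open>c \<noteq> T\<close> \<open>Next S pred = adr e\<close> \<open>Next S c = adr e\<close>
    by auto
  with S' show "Next S' = (Next S)(c := Next S (adr e))"
    by simp
qed

theorem lemma4p6:
  fixes H T :: "'a::countable" and S S' :: "('a, 'p) state" and e :: "('a, 'p) event"
    and c d a :: 'a and M Q R :: "'a list"
  assumes "infinite (UNIV :: 'a set)"
    and step: "RM_step H T S e S'"
    and chi: "chi e = 1"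
    and d: "d = adr e"
    and M: "main_branch H T S M"
    and cM: "c \<in> set M" and cT: "c \<noteq> T" and cd: "Next S c = d"
    and a: "a \<in> Active S"
    and Q: "path_to_tail T S a Q"
    and R: "path_to_tail T S' a R"
  shows "(R = Q \<or> R = filter (\<lambda>y. y \<noteq> d) Q)
       \<and> (c \<notin> set Q \<longrightarrow> R = Q)
       \<and> (c \<in> set Q \<longrightarrow> d \<in> set Q \<and> Next S d \<in> set Q \<and> R = filter (\<lambda>y. y \<noteq> d) Q)"
proof -
  have "d \<noteq> T" and Next': "Next S' = (Next S)(c := Next S d)"
    using RM_step_bypass[OF step chi M cM cT] cd d by auto
  have Q_chain: "next_chain (Next S) T Q" "hd Q = a"
    and R_chain: "next_chain (Next S') T R" "hd R = a"
    using path_to_tail_next_chain[OF Q] path_to_tail_next_chain[OF R] by auto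
  show ?thesis
  proof (cases "c \<in> set Q")
    case False
    then have "R = Q"
      using Q_chain R_chain Next' next_chain_fun_upd next_chain_unique by metis
    with False show ?thesis
      by simp
  next
    case True
    then have "R = filter (\<lambda>y. y \<noteq> d) Q"
      using next_chain_bypass_filter[OF Q_chain(1) True cT cd \<open>d \<noteq> T\<close>] Q_chain R_chain Next'
        next_chain_unique by metis
    moreover have "d \<in> set Q" "Next S d \<in> set Q"
      using next_chain_closed[OF Q_chain(1)] True cT cd \<open>d \<noteq> T\<close> by blast+
    ultimately show ?thesis
      using True by simp
  qed
qed

end
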